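(* Let $p\neq q$ be primes. (a) If $1\le a\le m$ and $1\le b\le n$ are integers, then $\langle p^a,q^b\rangle\le_P\langle p^m,q^n\rangle$. (b) If $n\ge1$ and $a,b\ge1$ are integers with $2\le a+b\le n+1$, then $\langle p^a,q^b\rangle\le_P B_n(p,q)$, where $B_n(p,q)=\langle p^n,p^{n-1}q,\ldots,pq^{n-1},q^n\rangle$. (c) Let $V$ be a numerical semigroup generated by $\{n_1,\ldots,n_k\}$ ($k\ge2$), let $d=\gcd(n_1,\ldots,n_{k-1})$ and let $U=\langle n_1/d,\ldots,n_{k-1}/d,n_k\rangle$. Then $U$ and $V$ are polynomially related (namely $U\le_P V$).
   Context: A numerical semigroup is a submonoid of $(\mathbb N,+)$ with finite complement in $\mathbb N$; $\langle A\rangle$ denotes the submonoid generated by $A$. $\mathrm H_S(x)=\sum_{s\in S}x^s$. Numerical semigroups $S$ and $T$ are polynomially related, written $S\le_P T$, if there exist $f(x)\in\mathbb Z[x]$ and an integer $w\ge1$ with $\mathrm H_S(x^w)f(x)=\mathrm H_T(x)$. *)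

theory Defs
  imports "HOL-Computational_Algebra.Computational_Algebra"
begin

definition submonoid_nat :: "nat set \<Rightarrow> bool" where
  "submonoid_nat M \<longleftrightarrow> 0 \<in> M \<and> (\<forall>x\<in>M. \<forall>y\<in>M. x + y \<in> M)"

definition numerical_semigroup :: "nat set \<Rightarrow> bool" where
  "numerical_semigroup S \<longleftrightarrow> submonoid_nat S \<and> finite (UNIV - S)"

definition gen :: "nat set \<Rightarrow> nat set" where
  "gen A = \<Inter>{M. A \<subseteq> M \<and> submonoid_nat M}"

definition hilb :: "nat set \<Rightarrow> int fps" where
  "hilb S = Abs_fps (\<lambda>n. if n \<in> S then 1 else 0)"

text \<open>H_S(x^w): the series sum over s in S of x^(w*s).\<close>
definition hilb_pow :: "nat set \<Rightarrow> nat \<Rightarrow> int fps" where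
  "hilb_pow S w = Abs_fps (\<lambda>n. if (\<exists>s\<in>S. n = w * s) then 1 else 0)"

definition poly_related :: "nat set \<Rightarrow> nat set \<Rightarrow> bool" where
  "poly_related S T \<longleftrightarrow> numerical_semigroup S \<and> numerical_semigroup T \<and>
     (\<exists>(f::int poly) (w::nat). w \<ge> 1 \<and> hilb_pow S w * fps_of_poly f = hilb T)"

definition B_sg :: "nat \<Rightarrow> nat \<Rightarrow> nat \<Rightarrow> nat set" where
  "B_sg n p q = gen {p ^ (n - i) * q ^ i | i. i \<le> n}"

end

theory Submission
  imports Defs "HOL-Number_Theory.Cong"
begin

text \<open>If \<open>S\<close> absorbs multiples of \<open>b\<close> and \<open>a\<close>, \<open>b\<close> are coprime, every element of
  \<open>T = a S + b \<nat>\<close> is uniquely \<open>a s + b j\<close> with \<open>s \<in> S\<close>, \<open>j < a\<close>; hence the gluing formula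
  \<open>H_T(x) = H_S(x^a) (1 + x^b + \<dots> + x^((a-1) b))\<close>. For \<open>S = \<nat>\<close> it gives the Hilbert series
  of \<open>\<langle>a, b\<rangle>\<close>, and (a) becomes an identity between products of geometric sums.
  Since \<open>B_n(p,q) = q B_(n-1)(p,q) + p^n \<nat>\<close>, iterating the formula expresses \<open>H_(B_n)\<close>
  through \<open>H_(B_i)(x^(p^j))\<close>, \<open>H_(B_j)(x^(q^i))\<close>; as \<open>(1 - x^c) H_S(x^c)\<close> is a polynomial for
  every numerical semigroup \<open>S\<close>, this yields (b). For (c), \<open>V = d U + n_k \<nat>\<close>, and \<open>d\<close> is
  coprime to \<open>n_k\<close> because \<open>V\<close> has finite complement.\<close>

section \<open>Generated submonoids\<close>

lemma submonoid_gen: "submonoid_nat (gen A)"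
  unfolding submonoid_nat_def gen_def by auto

lemma gen_subset: "A \<subseteq> gen A"
  unfolding gen_def by auto

lemma gen_least: "A \<subseteq> M \<Longrightarrow> submonoid_nat M \<Longrightarrow> gen A \<subseteq> M"
  unfolding gen_def by auto

lemma gen_mono: "A \<subseteq> B \<Longrightarrow> gen A \<subseteq> gen B"
  unfolding gen_def by auto

lemma zero_in_gen: "0 \<in> gen A"
  using submonoid_gen unfolding submonoid_nat_def by auto

lemma add_in_gen: "x \<in> gen A \<Longrightarrow> y \<in> gen A \<Longrightarrow> x + y \<in> gen A"
  using submonoid_gen unfolding submonoid_nat_def by auto

lemma mult_in_gen: "x \<in> gen A \<Longrightarrow> k * x \<in> gen A"
  by (induction k) (auto intro: add_in_gen zero_in_gen)

lemma add_mult_in_gen: "s \<in> gen A \<Longrightarrow> b \<in> gen A \<Longrightarrow> s + b * k \<in> gen A"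
  by (metis add_in_gen mult.commute mult_in_gen)

lemma gen_empty: "gen {} = {0}"
proof -
  have "submonoid_nat {0}" unfolding submonoid_nat_def by auto
  then show ?thesis using gen_least[of "{}" "{0}"] zero_in_gen by auto
qed

lemma gen_insert: "gen (insert c A) = {x + c * k | x k. x \<in> gen A}"
proof
  have "insert c A \<subseteq> {x + c * k | x k. x \<in> gen A}"
    using zero_in_gen gen_subset by (force intro: exI[of _ 1] exI[of _ 0])
  moreover have "submonoid_nat {x + c * k | x k. x \<in> gen A}"
    unfolding submonoid_nat_def
  proof (intro conjI ballI)
    show "0 \<in> {x + c * k | x k. x \<in> gen A}" using zero_in_gen by force
    fix y z assume "y \<in> {x + c * k | x k. x \<in> gen A}" "z \<in> {x + c * k | x k. x \<in> gen A}"
    then obtain x1 k1 x2 k2 where "y = x1 + c * k1" "z = x2 + c * k2" "x1 \<in> gen A" "x2 \<in> gen A"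
      by auto
    then show "y + z \<in> {x + c * k | x k. x \<in> gen A}"
      by (intro CollectI exI[of _ "x1 + x2"] exI[of _ "k1 + k2"]) (auto simp: algebra_simps add_in_gen)
  qed
  ultimately show "gen (insert c A) \<subseteq> {x + c * k | x k. x \<in> gen A}"
    by (rule gen_least)
next
  have "c \<in> gen (insert c A)" and "gen A \<subseteq> gen (insert c A)"
    using gen_subset[of "insert c A"] gen_mono[of A "insert c A"] by auto
  then show "{x + c * k | x k. x \<in> gen A} \<subseteq> gen (insert c A)"
    using add_mult_in_gen by blast
qed

lemma gen_pair: "gen {a, b} = {a * s + b * k | s k. True}"
  unfolding gen_insert[of a] gen_insert[of b] gen_empty by (auto simp: algebra_simps; metis add.commute mult.commute)

lemma gen_image_mult: "gen ((\<lambda>x. d * x) ` A) = (\<lambda>x. d * x) ` gen A"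
proof
  have "submonoid_nat ((\<lambda>x. d * x) ` gen A)"
    unfolding submonoid_nat_def
  proof (intro conjI ballI)
    show "0 \<in> (\<lambda>x. d * x) ` gen A" using zero_in_gen by force
    fix x y assume "x \<in> (\<lambda>x. d * x) ` gen A" "y \<in> (\<lambda>x. d * x) ` gen A"
    then obtain x1 x2 where "x = d * x1" "y = d * x2" "x1 \<in> gen A" "x2 \<in> gen A" by auto
    then show "x + y \<in> (\<lambda>x. d * x) ` gen A"
      by (intro image_eqI[of _ _ "x1 + x2"]) (auto simp: algebra_simps add_in_gen)
  qed
  then show "gen ((\<lambda>x. d * x) ` A) \<subseteq> (\<lambda>x. d * x) ` gen A"
    using gen_subset by (intro gen_least) auto
next
  have "submonoid_nat {x. d * x \<in> gen ((\<lambda>x. d * x) ` A)}"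
    unfolding submonoid_nat_def using zero_in_gen add_in_gen by (auto simp: algebra_simps)
  moreover have "A \<subseteq> {x. d * x \<in> gen ((\<lambda>x. d * x) ` A)}"
    using gen_subset[of "(\<lambda>x. d * x) ` A"] by auto
  ultimately show "(\<lambda>x. d * x) ` gen A \<subseteq> gen ((\<lambda>x. d * x) ` A)"
    using gen_least by blast
qed

section \<open>Numerical semigroups\<close>

lemma numerical_semigroup_iff:
  "numerical_semigroup S \<longleftrightarrow> submonoid_nat S \<and> (\<exists>N. \<forall>n\<ge>N. n \<in> S)"
proof -
  have "finite (UNIV - S) \<longleftrightarrow> (\<exists>N. \<forall>n\<ge>N. n \<in> S)"
  proof
    assume "finite (UNIV - S)"
    then obtain m where "\<forall>n\<in>UNIV - S. n \<le> m" by (auto simp: finite_nat_set_iff_bounded_le)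
    then show "\<exists>N. \<forall>n\<ge>N. n \<in> S" by (metis Diff_iff UNIV_I not_less_eq_eq)
  next
    assume "\<exists>N. \<forall>n\<ge>N. n \<in> S"
    then obtain N where "\<forall>n\<ge>N. n \<in> S" by blast
    then have "UNIV - S \<subseteq> {..<N}" by (auto simp: not_le[symmetric])
    then show "finite (UNIV - S)" using finite_subset by blast
  qed
  then show ?thesis unfolding numerical_semigroup_def by blast
qed

lemma numerical_semigroup_superset:
  assumes "numerical_semigroup S" "S \<subseteq> T" "submonoid_nat T"
  shows "numerical_semigroup T"
  using assms unfolding numerical_semigroup_iff by blast

lemma numerical_semigroup_gen_common_divisor:
  assumes "numerical_semigroup (gen A)" "\<And>x. x \<in> A \<Longrightarrow> g dvd x"
  shows "g = 1"
proof -
  have "submonoid_nat {x. g dvd x}" unfolding submonoid_nat_def by auto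
  then have "gen A \<subseteq> {x. g dvd x}" using assms(2) by (intro gen_least) auto
  moreover obtain N where "\<forall>n\<ge>N. n \<in> gen A" using assms(1) unfolding numerical_semigroup_iff by blast
  then have "N \<in> gen A" "N + 1 \<in> gen A" by simp_all
  ultimately have "g dvd N" "g dvd N + 1" by blast+
  then show ?thesis using dvd_add_right_iff[of g N 1] by simp
qed

lemma inj_on_mult_mod:
  fixes a b :: nat
  assumes "coprime a b"
  shows "inj_on (\<lambda>j. b * j mod a) {..<a}"
proof
  fix j j' assume "j \<in> {..<a}" "j' \<in> {..<a}" "b * j mod a = b * j' mod a"
  then have "[j = j'] (mod a)"
    using assms by (simp add: cong_def[symmetric] cong_mult_lcancel_nat coprime_commute)
  then show "j = j'" using \<open>j \<in> {..<a}\<close> \<open>j' \<in> {..<a}\<close> by (simp add: cong_def)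
qed

lemma numerical_semigroup_gen_pair:
  fixes a b :: nat
  assumes cop: "coprime a b" and "a \<ge> 1"
  shows "numerical_semigroup (gen {a, b})"
proof -
  have "(\<lambda>j. b * j mod a) ` {..<a} \<subseteq> {..<a}" using \<open>a \<ge> 1\<close> by auto
  then have residues: "(\<lambda>j. b * j mod a) ` {..<a} = {..<a}"
    using endo_inj_surj inj_on_mult_mod[OF cop] by blast
  have "n \<in> gen {a, b}" if "n \<ge> a * b" for n
  proof -
    have "n mod a \<in> (\<lambda>j. b * j mod a) ` {..<a}" using \<open>a \<ge> 1\<close> residues by simp
    then obtain j where j: "j < a" "n mod a = b * j mod a" by auto
    have "b * j \<le> a * b" using j(1) by (simp add: mult.commute)
    then have "b * j \<le> n" using that by linarith
    then have "a dvd n - b * j" using j(2) by (simp add: mod_eq_dvd_iff_nat)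
    then obtain s where "n - b * j = a * s" by blast
    then have "n = a * s + b * j" using \<open>b * j \<le> n\<close> by simp
    then show ?thesis unfolding gen_pair by blast
  qed
  then show ?thesis unfolding numerical_semigroup_iff using submonoid_gen by blast
qed

section \<open>Geometric sums and Hilbert series\<close>

definition geom_fps :: "nat \<Rightarrow> nat \<Rightarrow> int fps" where
  "geom_fps k c = (\<Sum>j<k. fps_X ^ (c * j))"

lemma geom_fps_eq_fps_of_poly: "geom_fps k c = fps_of_poly (\<Sum>j<k. monom 1 (c * j))"
  by (simp add: fps_of_poly_sum fps_of_poly_monom' geom_fps_def)

lemma one_minus_X_pow_times_geom_fps: "(1 - fps_X ^ c) * geom_fps k c = 1 - fps_X ^ (c * k)"
proof (induction k)
  case (Suc k)
  have "(1 - fps_X ^ c) * geom_fps (Suc k) c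
      = (1 - fps_X ^ c) * geom_fps k c + (1 - fps_X ^ c) * fps_X ^ (c * k)"
    by (simp add: geom_fps_def algebra_simps)
  also have "\<dots> = 1 - fps_X ^ (c * Suc k)"
    using Suc by (simp add: algebra_simps power_add)
  finally show ?case .
qed (simp add: geom_fps_def)

lemma one_minus_X_pow_nonzero:
  assumes "c \<ge> 1"
  shows "(1 - fps_X ^ c :: int fps) \<noteq> 0"
proof -
  have nth_0: "(1 - fps_X ^ c :: int fps) $ 0 = 1" using assms by simp
  show ?thesis
  proof
    assume "(1 - fps_X ^ c :: int fps) = 0"
    then show False using nth_0 by (metis fps_zero_nth zero_neq_one)
  qed
qed

lemma geom_fps_mult:
  assumes "c \<ge> 1"
  shows "geom_fps k c * geom_fps l (c * k) = geom_fps (k * l) c"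
proof -
  have "(1 - fps_X ^ c) * (geom_fps k c * geom_fps l (c * k)) = (1 - fps_X ^ c) * geom_fps (k * l) c"
    by (simp add: one_minus_X_pow_times_geom_fps mult.assoc[symmetric])
  then show ?thesis using one_minus_X_pow_nonzero[OF assms] by simp
qed

lemma one_minus_X_pow_times_hilb_pow_UNIV:
  assumes "c \<ge> 1"
  shows "(1 - fps_X ^ c) * hilb_pow UNIV c = 1"
proof (rule fps_ext)
  fix n
  have coeff: "hilb_pow UNIV c $ m = of_bool (c dvd m)" for m
    by (auto simp: hilb_pow_def dvd_def)
  show "((1 - fps_X ^ c) * hilb_pow UNIV c) $ n = 1 $ n"
  proof (cases "n < c")
    case True
    then have "c dvd n \<longleftrightarrow> n = 0" using dvd_imp_le by (cases "n = 0") auto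
    then show ?thesis using True by (simp add: algebra_simps coeff fps_X_power_mult_right_nth)
  next
    case False
    then have "c dvd (n - c) \<longleftrightarrow> c dvd n" by (simp add: dvd_minus_self)
    then show ?thesis using False assms by (simp add: algebra_simps coeff fps_X_power_mult_right_nth)
  qed
qed

lemma hilb_pow_UNIV_mult_times_geom_fps:
  assumes "c \<ge> 1" "k \<ge> 1"
  shows "hilb_pow UNIV (c * k) * geom_fps k c = hilb_pow UNIV c"
proof -
  have "(1 - fps_X ^ c) * (hilb_pow UNIV (c * k) * geom_fps k c)
      = (1 - fps_X ^ (c * k)) * hilb_pow UNIV (c * k)"
    by (simp add: one_minus_X_pow_times_geom_fps flip: mult.assoc)
  also have "\<dots> = (1 - fps_X ^ c) * hilb_pow UNIV c"
    using assms by (simp add: one_minus_X_pow_times_hilb_pow_UNIV)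
  finally show ?thesis using one_minus_X_pow_nonzero[OF assms(1)] by simp
qed

lemma hilb_pow_Suc_0 [simp]: "hilb_pow S (Suc 0) = hilb S"
  unfolding hilb_pow_def hilb_def by auto

lemma hilb_pow_eq_hilb_image: "hilb_pow S w = hilb ((\<lambda>s. w * s) ` S)"
  unfolding hilb_pow_def hilb_def by (intro arg_cong[where f = Abs_fps] ext) (auto simp: image_iff)

lemma hilb_pow_times_X_pow_nth:
  "(hilb_pow S w * fps_X ^ f) $ n = of_bool (\<exists>s\<in>S. n = w * s + f)"
proof (cases "n < f")
  case False
  then have "n - f = w * s \<longleftrightarrow> n = w * s + f" for s by auto
  then show ?thesis using False by (simp add: fps_X_power_mult_right_nth hilb_pow_def)
qed (auto simp: fps_X_power_mult_right_nth)

lemma hilb_eq_hilb_pow_times_translates: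
  assumes "finite F"
    and mem: "\<And>n. n \<in> T \<longleftrightarrow> (\<exists>f\<in>F. \<exists>s\<in>S. n = w * s + f)"
    and uniq: "\<And>f f' s s'. f \<in> F \<Longrightarrow> f' \<in> F \<Longrightarrow> s \<in> S \<Longrightarrow> s' \<in> S \<Longrightarrow>
                 w * s + f = w * s' + f' \<Longrightarrow> f = f'"
  shows "hilb T = hilb_pow S w * (\<Sum>f\<in>F. fps_X ^ f)"
proof (rule fps_ext)
  fix n
  let ?F = "F \<inter> {f. \<exists>s\<in>S. n = w * s + f}"
  have "(hilb_pow S w * (\<Sum>f\<in>F. fps_X ^ f)) $ n = of_nat (card ?F)"
    by (simp add: sum_distrib_left fps_sum_nth hilb_pow_times_X_pow_nth assms(1))
  also have "card ?F = of_bool (n \<in> T)"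
  proof (cases "n \<in> T")
    case True
    then obtain f0 where "f0 \<in> F" "\<exists>s\<in>S. n = w * s + f0" using mem by blast
    then have "?F = {f0}" using uniq by auto
    then show ?thesis using True by simp
  next
    case False
    then have "?F = {}" using mem by auto
    then show ?thesis using False by simp
  qed
  finally show "hilb T $ n = (hilb_pow S w * (\<Sum>f\<in>F. fps_X ^ f)) $ n"
    by (simp add: hilb_def)
qed

lemma hilb_pow_finite:
  assumes "finite F" "c \<ge> 1"
  shows "hilb_pow F c = (\<Sum>g\<in>F. fps_X ^ (c * g))"
proof -
  have "hilb ((\<lambda>g. c * g) ` F) = hilb_pow {0} 1 * (\<Sum>f\<in>(\<lambda>g. c * g) ` F. fps_X ^ f)"
    by (rule hilb_eq_hilb_pow_times_translates) (use assms(1) in auto)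
  also have "\<dots> = (\<Sum>g\<in>F. fps_X ^ (c * g))"
  proof -
    have "hilb_pow {0} 1 = 1" by (simp add: hilb_def fps_eq_iff)
    moreover have "inj_on (\<lambda>g. c * g) F" using assms(2) by (auto simp: inj_on_def)
    ultimately show ?thesis by (simp add: sum.reindex)
  qed
  finally show ?thesis by (simp add: hilb_pow_eq_hilb_image)
qed

lemma hilb_pow_add_hilb_pow_compl:
  assumes "c \<ge> 1"
  shows "hilb_pow S c + hilb_pow (UNIV - S) c = hilb_pow UNIV c"
  using assms by (auto simp: fps_eq_iff hilb_pow_def)

lemma numerical_semigroup_hilb_pow_times_poly:
  assumes "numerical_semigroup S" "c \<ge> 1"
  shows "\<exists>g. fps_of_poly g = (1 - fps_X ^ c) * hilb_pow S c"
proof -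
  have gaps: "finite (UNIV - S)" using assms(1) unfolding numerical_semigroup_def by blast
  have "hilb_pow S c = hilb_pow UNIV c - hilb_pow (UNIV - S) c"
    using hilb_pow_add_hilb_pow_compl[OF assms(2), of S] by (simp add: eq_diff_eq)
  then have "(1 - fps_X ^ c) * hilb_pow S c = 1 - (1 - fps_X ^ c) * hilb_pow (UNIV - S) c"
    using one_minus_X_pow_times_hilb_pow_UNIV[OF assms(2)] by (simp add: right_diff_distrib)
  also have "\<dots> = fps_of_poly (1 - (1 - monom 1 c) * (\<Sum>g\<in>UNIV - S. monom 1 (c * g)))"
    using gaps assms(2)
    by (simp add: hilb_pow_finite fps_of_poly_sum fps_of_poly_monom' fps_of_poly_mult fps_of_poly_diff)
  finally show ?thesis by metis
qed

section \<open>Gluing and two-generator semigroups\<close>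

lemma poly_relatedI:
  assumes "numerical_semigroup S" "numerical_semigroup T" "w \<ge> 1"
    and "hilb_pow S w * fps_of_poly f = hilb T"
  shows "poly_related S T"
  using assms unfolding poly_related_def by blast

lemma hilb_pow_gluing:
  fixes a b w :: nat
  assumes cop: "coprime a b" and "a \<ge> 1" "b \<ge> 1" "w \<ge> 1"
    and closed: "\<And>s k. s \<in> S \<Longrightarrow> s + b * k \<in> S"
    and T: "T = {a * s + b * k | s k. s \<in> S}"
  shows "hilb_pow T w = hilb_pow S (w * a) * geom_fps a (w * b)"
proof -
  let ?F = "(\<lambda>j. w * b * j) ` {..<a}"
  have "hilb ((\<lambda>t. w * t) ` T) = hilb_pow S (w * a) * (\<Sum>f\<in>?F. fps_X ^ f)"
  proof (rule hilb_eq_hilb_pow_times_translates)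
    fix n
    show "n \<in> (\<lambda>t. w * t) ` T \<longleftrightarrow> (\<exists>f\<in>?F. \<exists>s\<in>S. n = w * a * s + f)"
    proof
      assume "n \<in> (\<lambda>t. w * t) ` T"
      then obtain s k where "s \<in> S" and n: "n = w * (a * s + b * k)" using T by auto
      have "a * s + b * k = a * s + b * (a * (k div a) + k mod a)" by (simp only: mult_div_mod_eq)
      also have "\<dots> = a * (s + b * (k div a)) + b * (k mod a)"
        by (simp only: distrib_left add.assoc mult.left_commute)
      finally have "n = w * a * (s + b * (k div a)) + w * b * (k mod a)"
        unfolding n by (simp only:) (simp add: algebra_simps)
      moreover have "k mod a < a" using \<open>a \<ge> 1\<close> by simp
      ultimately show "\<exists>f\<in>?F. \<exists>s\<in>S. n = w * a * s + f" using closed[OF \<open>s \<in> S\<close>] by blast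
    next
      assume "\<exists>f\<in>?F. \<exists>s\<in>S. n = w * a * s + f"
      then obtain j s where "s \<in> S" "n = w * a * s + w * b * j" by blast
      then have "n = w * (a * s + b * j)" by (simp add: algebra_simps)
      moreover have "a * s + b * j \<in> T" using T \<open>s \<in> S\<close> by blast
      ultimately show "n \<in> (\<lambda>t. w * t) ` T" by (rule image_eqI)
    qed
  next
    fix f f' s s' assume "f \<in> ?F" "f' \<in> ?F" and eq: "w * a * s + f = w * a * s' + f'"
    then obtain j j' where j: "j < a" "j' < a" "f = w * b * j" "f' = w * b * j'" by blast
    then have "w * (a * s + b * j) = w * (a * s' + b * j')" using eq by (simp add: algebra_simps)
    then have "(a * s + b * j) mod a = (a * s' + b * j') mod a" using \<open>w \<ge> 1\<close> by simp
    then have "b * j mod a = b * j' mod a" by simp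
    then have "j = j'" by (rule inj_onD[OF inj_on_mult_mod[OF cop]]) (use j in simp_all)
    then show "f = f'" using j by simp
  qed simp
  moreover have "(\<Sum>f\<in>?F. fps_X ^ f) = geom_fps a (w * b)"
  proof -
    have "inj_on (\<lambda>j. w * b * j) {..<a}" using \<open>w \<ge> 1\<close> \<open>b \<ge> 1\<close> by (auto simp: inj_on_def)
    then show ?thesis unfolding geom_fps_def by (simp add: sum.reindex)
  qed
  ultimately show ?thesis by (simp add: hilb_pow_eq_hilb_image)
qed

lemma hilb_pow_gen_pair:
  fixes a b w :: nat
  assumes "coprime a b" "a \<ge> 1" "b \<ge> 1" "w \<ge> 1"
  shows "hilb_pow (gen {a, b}) w = hilb_pow UNIV (w * a) * geom_fps a (w * b)"
  by (rule hilb_pow_gluing[OF assms]) (simp_all add: gen_pair)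

lemma hilb_pow_gen_pair_times_geom_fps:
  fixes a b k l :: nat
  assumes cop: "coprime (a * k) (b * l)" and "a \<ge> 1" "b \<ge> 1" "k \<ge> 1" "l \<ge> 1"
  shows "hilb_pow (gen {a, b}) (k * l) * (geom_fps l (a * k) * geom_fps k (b * l))
       = hilb (gen {a * k, b * l})"
proof -
  have "coprime a b" using cop by simp
  then have "hilb_pow (gen {a, b}) (k * l) = hilb_pow UNIV (a * k * l) * geom_fps a (b * l * k)"
    using assms hilb_pow_gen_pair[of a b "k * l"] by (simp add: mult_ac)
  then have "hilb_pow (gen {a, b}) (k * l) * (geom_fps l (a * k) * geom_fps k (b * l))
      = (hilb_pow UNIV (a * k * l) * geom_fps l (a * k)) * (geom_fps k (b * l) * geom_fps a (b * l * k))"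
    by (simp only: mult_ac)
  also have "\<dots> = hilb_pow UNIV (a * k) * geom_fps (a * k) (b * l)"
    using assms hilb_pow_UNIV_mult_times_geom_fps[of "a * k" l] geom_fps_mult[of "b * l" k a]
    by (simp add: mult.commute[of k a])
  also have "\<dots> = hilb (gen {a * k, b * l})"
    using assms hilb_pow_gen_pair[OF cop, of 1] by simp
  finally show ?thesis .
qed

lemma poly_related_gen_pair_mult:
  fixes a b k l :: nat
  assumes cop: "coprime (a * k) (b * l)" and "a \<ge> 1" "b \<ge> 1" "k \<ge> 1" "l \<ge> 1"
  shows "poly_related (gen {a, b}) (gen {a * k, b * l})"
proof (rule poly_relatedI)
  show "numerical_semigroup (gen {a, b})" "numerical_semigroup (gen {a * k, b * l})"
    using assms by (simp_all add: numerical_semigroup_gen_pair)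
  show "k * l \<ge> 1" using assms by simp
  show "hilb_pow (gen {a, b}) (k * l) * fps_of_poly
          ((\<Sum>j<l. monom 1 (a * k * j)) * (\<Sum>j<k. monom 1 (b * l * j))) = hilb (gen {a * k, b * l})"
    using hilb_pow_gen_pair_times_geom_fps[OF assms]
    by (simp add: geom_fps_eq_fps_of_poly fps_of_poly_mult)
qed

section \<open>The semigroups \<open>B_n(p,q)\<close>\<close>

lemma B_sg_generators_Suc:
  fixes p q :: nat
  shows "{p ^ (Suc M - i) * q ^ i | i. i \<le> Suc M}
     = insert (p ^ Suc M) ((\<lambda>x. q * x) ` {p ^ (M - i) * q ^ i | i. i \<le> M})"
proof (intro set_eqI iffI)
  fix x assume "x \<in> {p ^ (Suc M - i) * q ^ i | i. i \<le> Suc M}"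
  then obtain i where i: "i \<le> Suc M" "x = p ^ (Suc M - i) * q ^ i" by blast
  show "x \<in> insert (p ^ Suc M) ((\<lambda>x. q * x) ` {p ^ (M - i) * q ^ i | i. i \<le> M})"
  proof (cases i)
    case (Suc j)
    then have "x = q * (p ^ (M - j) * q ^ j)" using i by (simp add: algebra_simps)
    then show ?thesis using i Suc by blast
  qed (use i in simp)
next
  fix x assume "x \<in> insert (p ^ Suc M) ((\<lambda>x. q * x) ` {p ^ (M - i) * q ^ i | i. i \<le> M})"
  then consider "x = p ^ Suc M" | i where "i \<le> M" "x = q * (p ^ (M - i) * q ^ i)" by blast
  then show "x \<in> {p ^ (Suc M - i) * q ^ i | i. i \<le> Suc M}"
  proof cases
    case 1 then show ?thesis by (intro CollectI exI[of _ 0]) simp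
  next
    case 2 then show ?thesis by (intro CollectI exI[of _ "Suc i"]) (simp add: mult_ac)
  qed
qed

lemma B_sg_0: "B_sg 0 p q = UNIV"
proof -
  have "B_sg 0 p q = gen {1}" unfolding B_sg_def by simp
  also have "\<dots> = UNIV" unfolding gen_insert gen_empty by force
  finally show ?thesis .
qed

lemma B_sg_Suc: "B_sg (Suc M) p q = {q * s + p ^ Suc M * k | s k. s \<in> B_sg M p q}"
  unfolding B_sg_def B_sg_generators_Suc gen_insert gen_image_mult by blast

lemma power_Suc_in_B_sg: "p ^ Suc M \<in> B_sg M p q"
proof -
  have "p ^ M \<in> B_sg M p q"
    unfolding B_sg_def by (rule subsetD[OF gen_subset]) (auto intro: exI[of _ 0])
  then show ?thesis unfolding B_sg_def by (simp add: mult_in_gen)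
qed

lemma numerical_semigroup_B_sg:
  assumes "coprime p q" "p \<ge> 1"
  shows "numerical_semigroup (B_sg n p q)"
proof (rule numerical_semigroup_superset)
  show "numerical_semigroup (gen {p ^ n, q ^ n})"
    using assms by (simp add: numerical_semigroup_gen_pair)
  have "{p ^ n, q ^ n} \<subseteq> {p ^ (n - i) * q ^ i | i. i \<le> n}"
    by (auto intro: exI[of _ 0] exI[of _ n])
  then show "gen {p ^ n, q ^ n} \<subseteq> B_sg n p q" unfolding B_sg_def by (rule gen_mono)
  show "submonoid_nat (B_sg n p q)" unfolding B_sg_def by (rule submonoid_gen)
qed

lemma hilb_pow_B_sg_Suc:
  assumes "coprime p q" "p \<ge> 1" "q \<ge> 1" "w \<ge> 1"
  shows "hilb_pow (B_sg (Suc M) p q) w = hilb_pow (B_sg M p q) (w * q) * geom_fps q (w * p ^ Suc M)"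
proof (rule hilb_pow_gluing)
  show "coprime q (p ^ Suc M)" using assms(1) by (simp add: coprime_commute)
  show "s + p ^ Suc M * k \<in> B_sg M p q" if "s \<in> B_sg M p q" for s k
    using that power_Suc_in_B_sg[of p M q] unfolding B_sg_def by (rule add_mult_in_gen)
qed (use assms B_sg_Suc in simp_all)

text \<open>Stated at \<open>x^w\<close> so that the induction on \<open>b\<close> can absorb a factor \<open>q\<close> into \<open>w\<close>.\<close>
lemma hilb_pow_B_sg_split:
  assumes cop: "coprime p q" and "p \<ge> 1" "q \<ge> 1" "w \<ge> 1"
  shows "(1 - fps_X ^ (w * p ^ Suc a * q ^ Suc b)) * hilb_pow (B_sg b p q) (w * p ^ Suc a)
           * hilb_pow (B_sg a p q) (w * q ^ Suc b)
         = hilb_pow (B_sg (Suc (a + b)) p q) w"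
  using \<open>w \<ge> 1\<close>
proof (induction b arbitrary: w)
  case 0
  let ?c = "w * p ^ Suc a"
  have "?c \<ge> 1" using 0 \<open>p \<ge> 1\<close> by simp
  have "(1 - fps_X ^ (?c * q)) * hilb_pow (B_sg 0 p q) ?c
      = geom_fps q ?c * ((1 - fps_X ^ ?c) * hilb_pow UNIV ?c)"
    unfolding B_sg_0 one_minus_X_pow_times_geom_fps[symmetric] by (simp only: mult_ac)
  also have "\<dots> = geom_fps q ?c"
    using one_minus_X_pow_times_hilb_pow_UNIV[OF \<open>?c \<ge> 1\<close>] by simp
  finally have "(1 - fps_X ^ (?c * q)) * hilb_pow (B_sg 0 p q) ?c = geom_fps q ?c" .
  moreover have "hilb_pow (B_sg (Suc a) p q) w = hilb_pow (B_sg a p q) (w * q) * geom_fps q ?c"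
    using hilb_pow_B_sg_Suc[OF cop \<open>p \<ge> 1\<close> \<open>q \<ge> 1\<close> 0] .
  ultimately show ?case by (simp add: mult_ac)
next
  case (Suc b)
  have "w * q \<ge> 1" and "w * p ^ Suc a \<ge> 1" using Suc.prems \<open>p \<ge> 1\<close> \<open>q \<ge> 1\<close> by simp_all
  have IH: "(1 - fps_X ^ (w * p ^ Suc a * q ^ Suc (Suc b))) * hilb_pow (B_sg b p q) (w * p ^ Suc a * q)
      * hilb_pow (B_sg a p q) (w * q ^ Suc (Suc b)) = hilb_pow (B_sg (Suc (a + b)) p q) (w * q)"
    using Suc.IH[OF \<open>w * q \<ge> 1\<close>] by (simp add: mult_ac)
  have split_p: "hilb_pow (B_sg (Suc b) p q) (w * p ^ Suc a)
      = hilb_pow (B_sg b p q) (w * p ^ Suc a * q) * geom_fps q (w * p ^ Suc (Suc (a + b)))"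
    using hilb_pow_B_sg_Suc[OF cop \<open>p \<ge> 1\<close> \<open>q \<ge> 1\<close> \<open>w * p ^ Suc a \<ge> 1\<close>, of b]
    by (simp add: mult_ac power_add)
  have "(1 - fps_X ^ (w * p ^ Suc a * q ^ Suc (Suc b))) * hilb_pow (B_sg (Suc b) p q) (w * p ^ Suc a)
          * hilb_pow (B_sg a p q) (w * q ^ Suc (Suc b))
      = ((1 - fps_X ^ (w * p ^ Suc a * q ^ Suc (Suc b))) * hilb_pow (B_sg b p q) (w * p ^ Suc a * q)
          * hilb_pow (B_sg a p q) (w * q ^ Suc (Suc b))) * geom_fps q (w * p ^ Suc (Suc (a + b)))"
    unfolding split_p by (simp only: mult_ac)
  also have "\<dots> = hilb_pow (B_sg (Suc (a + b)) p q) (w * q) * geom_fps q (w * p ^ Suc (Suc (a + b)))"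
    unfolding IH ..
  also have "\<dots> = hilb_pow (B_sg (Suc (a + Suc b)) p q) w"
    using hilb_pow_B_sg_Suc[OF cop \<open>p \<ge> 1\<close> \<open>q \<ge> 1\<close> Suc.prems, of "Suc (a + b)"] by simp
  finally show ?case .
qed

lemma hilb_gen_pair_times_poly_eq_hilb_B_sg:
  assumes cop: "coprime p q" and "p \<ge> 1" "q \<ge> 1"
  shows "\<exists>g. hilb (gen {p ^ Suc a, q ^ Suc b}) * fps_of_poly g = hilb (B_sg (Suc (a + b)) p q)"
proof -
  let ?P = "p ^ Suc a" and ?Q = "q ^ Suc b"
  have "?P \<ge> 1" "?Q \<ge> 1" using assms by simp_all
  obtain g1 where g1: "fps_of_poly g1 = (1 - fps_X ^ ?P) * hilb_pow (B_sg b p q) ?P"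
    using numerical_semigroup_hilb_pow_times_poly[OF numerical_semigroup_B_sg \<open>?P \<ge> 1\<close>] assms by blast
  obtain g2 where g2: "fps_of_poly g2 = (1 - fps_X ^ ?Q) * hilb_pow (B_sg a p q) ?Q"
    using numerical_semigroup_hilb_pow_times_poly[OF numerical_semigroup_B_sg \<open>?Q \<ge> 1\<close>] assms by blast
  have "hilb (gen {?P, ?Q}) = hilb_pow UNIV ?P * geom_fps ?P ?Q"
    using hilb_pow_gen_pair[of ?P ?Q 1] assms by simp
  then have "hilb (gen {?P, ?Q}) * fps_of_poly (g1 * g2)
      = ((1 - fps_X ^ ?P) * hilb_pow UNIV ?P) * ((1 - fps_X ^ ?Q) * geom_fps ?P ?Q)
          * hilb_pow (B_sg b p q) ?P * hilb_pow (B_sg a p q) ?Q"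
    by (simp add: fps_of_poly_mult g1 g2 mult_ac)
  also have "\<dots> = (1 - fps_X ^ (?P * ?Q)) * hilb_pow (B_sg b p q) ?P * hilb_pow (B_sg a p q) ?Q"
    unfolding one_minus_X_pow_times_hilb_pow_UNIV[OF \<open>?P \<ge> 1\<close>] one_minus_X_pow_times_geom_fps
    by (simp only: mult_1_left mult.commute[of ?Q ?P])
  also have "\<dots> = hilb (B_sg (Suc (a + b)) p q)"
    using hilb_pow_B_sg_split[OF cop \<open>p \<ge> 1\<close> \<open>q \<ge> 1\<close> order_refl, of a b]
    by (simp only: mult_1_left) (simp only: One_nat_def hilb_pow_Suc_0)
  finally show ?thesis by blast
qed

lemma poly_related_gen_pair_B_sg:
  assumes cop: "coprime p q" and "p \<ge> 1" "q \<ge> 1" and "a \<ge> 1" "b \<ge> 1" "a + b \<le> n + 1"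
  shows "poly_related (gen {p ^ a, q ^ b}) (B_sg n p q)"
proof -
  define a0 c0 where "a0 = a - 1" and "c0 = n - a"
  have a: "a = Suc a0" and n: "n = Suc (a0 + c0)" and "b \<le> Suc c0"
    using assms(4-6) unfolding a0_def c0_def by simp_all
  let ?l = "q ^ (Suc c0 - b)"
  have "coprime (p ^ a * 1) (q ^ b * ?l)" using cop by simp
  then have to_pair: "hilb_pow (gen {p ^ a, q ^ b}) ?l * fps_of_poly (\<Sum>j<?l. monom 1 (p ^ a * j))
      = hilb (gen {p ^ Suc a0, q ^ Suc c0})"
    using hilb_pow_gen_pair_times_geom_fps[of "p ^ a" 1 "q ^ b" ?l] assms a \<open>b \<le> Suc c0\<close>
    by (simp add: geom_fps_eq_fps_of_poly flip: power_add)
  obtain g where "hilb (gen {p ^ Suc a0, q ^ Suc c0}) * fps_of_poly g = hilb (B_sg n p q)"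
    using hilb_gen_pair_times_poly_eq_hilb_B_sg[OF assms(1-3)] n by blast
  then have "hilb_pow (gen {p ^ a, q ^ b}) ?l * fps_of_poly ((\<Sum>j<?l. monom 1 (p ^ a * j)) * g)
      = hilb (B_sg n p q)"
    by (simp only: fps_of_poly_mult mult.assoc[symmetric] to_pair)
  moreover have "?l \<ge> 1" using \<open>q \<ge> 1\<close> by simp
  ultimately show ?thesis
    using assms by (intro poly_relatedI numerical_semigroup_gen_pair numerical_semigroup_B_sg) simp_all
qed

section \<open>Dividing generators by a common factor\<close>

lemma gen_insert_image_mult:
  "gen (insert c ((\<lambda>x. d * x) ` D)) = {d * s + c * k | s k. s \<in> gen (insert c D)}"
proof -
  have "gen (insert c ((\<lambda>x. d * x) ` D)) = {d * y + c * k | y k. y \<in> gen D}"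
    unfolding gen_insert gen_image_mult by blast
  also have "\<dots> = {d * s + c * k | s k. s \<in> gen (insert c D)}"
  proof (intro set_eqI iffI)
    fix v assume "v \<in> {d * y + c * k | y k. y \<in> gen D}"
    then obtain y k where "y \<in> gen D" "v = d * (y + c * 0) + c * k" by auto
    then show "v \<in> {d * s + c * k | s k. s \<in> gen (insert c D)}" unfolding gen_insert by blast
  next
    fix v assume "v \<in> {d * s + c * k | s k. s \<in> gen (insert c D)}"
    then obtain y k k' where "y \<in> gen D" "v = d * (y + c * k') + c * k" unfolding gen_insert by blast
    then have "y \<in> gen D" "v = d * y + c * (d * k' + k)" by (simp_all add: algebra_simps)
    then show "v \<in> {d * y + c * k | y k. y \<in> gen D}" by blast
  qed
  finally show ?thesis .
qed

lemma numerical_semigroup_of_scaled: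
  fixes d c :: nat
  assumes cop: "coprime d c" and "d \<ge> 1" and V: "V = {d * s + c * k | s k. s \<in> U}"
    and "numerical_semigroup V" "submonoid_nat U" and closed: "\<And>s k. s \<in> U \<Longrightarrow> s + c * k \<in> U"
  shows "numerical_semigroup U"
proof -
  obtain N where N: "\<forall>n\<ge>N. n \<in> V" using assms(4) unfolding numerical_semigroup_iff by blast
  have "m \<in> U" if "m \<ge> N" for m
  proof -
    have "d * m \<in> V" using N that \<open>d \<ge> 1\<close> by (simp add: le_trans[OF _ mult_le_mono1[of 1 d m]])
    then obtain s k where "s \<in> U" and dm: "d * m = d * s + c * k" using V by blast
    then have "d dvd c * k" by (metis dvd_add_right_iff dvd_triv_left)
    then obtain k' where "k = d * k'" using cop by (auto simp: coprime_dvd_mult_right_iff)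
    then have "d * m = d * (s + c * k')" using dm by (simp add: algebra_simps)
    then have "m = s + c * k'" using \<open>d \<ge> 1\<close> by simp
    then show "m \<in> U" using closed[OF \<open>s \<in> U\<close>] by simp
  qed
  then show ?thesis unfolding numerical_semigroup_iff using assms(5) by blast
qed

lemma poly_related_gen_insert_image_mult:
  fixes c d :: nat
  assumes "d \<ge> 1" "c \<ge> 1" and num: "numerical_semigroup (gen (insert c ((\<lambda>x. d * x) ` D)))"
  shows "poly_related (gen (insert c D)) (gen (insert c ((\<lambda>x. d * x) ` D)))"
proof (rule poly_relatedI)
  let ?U = "gen (insert c D)" and ?V = "gen (insert c ((\<lambda>x. d * x) ` D))"
  have "gcd d c = 1"
    using num by (rule numerical_semigroup_gen_common_divisor) auto
  then have cop: "coprime d c" by (simp add: coprime_iff_gcd_eq_1)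
  have closed: "s + c * k \<in> ?U" if "s \<in> ?U" for s k
    using that gen_subset[of "insert c D"] by (intro add_mult_in_gen) auto
  show "numerical_semigroup ?U"
    using cop \<open>d \<ge> 1\<close> gen_insert_image_mult num submonoid_gen closed
    by (rule numerical_semigroup_of_scaled)
  show "numerical_semigroup ?V" "d \<ge> 1" by (fact num, fact)
  have "hilb_pow ?V 1 = hilb_pow ?U (1 * d) * geom_fps d (1 * c)"
    using cop assms(1,2) closed gen_insert_image_mult by (intro hilb_pow_gluing) auto
  then show "hilb_pow ?U d * fps_of_poly (\<Sum>j<d. monom 1 (c * j)) = hilb ?V"
    by (simp add: geom_fps_eq_fps_of_poly)
qed

lemma poly_related_divide_butlast_by_Gcd:
  fixes ns :: "nat list"
  assumes "length ns \<ge> 2" "\<forall>x\<in>set ns. x \<ge> 1" "numerical_semigroup (gen (set ns))"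
  shows "poly_related (gen ((\<lambda>x. x div Gcd (set (butlast ns))) ` set (butlast ns) \<union> {last ns}))
           (gen (set ns))"
proof -
  let ?d = "Gcd (set (butlast ns))" and ?D = "(\<lambda>x. x div Gcd (set (butlast ns))) ` set (butlast ns)"
  have set_ns: "set ns = insert (last ns) (set (butlast ns))"
    using assms(1) by (metis append_butlast_last_id list.size(3) not_numeral_le_zero
        set_append Un_insert_right empty_set list.set(2) sup_bot.right_neutral)
  have "butlast ns \<noteq> []" using assms(1) by (auto simp flip: length_greater_0_conv)
  then obtain x where "x \<in> set (butlast ns)" by (meson last_in_set)
  then have "?d \<noteq> 0" using assms(2) set_ns by (auto simp: Gcd_0_iff)
  then have "?d \<ge> 1" by linarith
  have "(\<lambda>x. ?d * x) ` ?D = set (butlast ns)"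
    by (force simp: image_image Gcd_dvd)
  then have "set ns = insert (last ns) ((\<lambda>x. ?d * x) ` ?D)" using set_ns by simp
  moreover have "last ns \<ge> 1" using assms(1,2) by (cases ns) auto
  ultimately show ?thesis
    using poly_related_gen_insert_image_mult[OF \<open>?d \<ge> 1\<close>, of "last ns" ?D] assms(3) by simp
qed

theorem corollary5:
  fixes p q :: nat
  assumes "prime p" and "prime q" and "p \<noteq> q"
  shows "(\<forall>a b m n :: nat. 1 \<le> a \<and> a \<le> m \<and> 1 \<le> b \<and> b \<le> n \<longrightarrow>
            poly_related (gen {p ^ a, q ^ b}) (gen {p ^ m, q ^ n}))
       \<and> (\<forall>n a b :: nat. n \<ge> 1 \<and> a \<ge> 1 \<and> b \<ge> 1 \<and> 2 \<le> a + b \<and> a + b \<le> n + 1 \<longrightarrow>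
            poly_related (gen {p ^ a, q ^ b}) (B_sg n p q))
       \<and> (\<forall>ns :: nat list. length ns \<ge> 2 \<and> (\<forall>x\<in>set ns. x \<ge> 1) \<and>
            numerical_semigroup (gen (set ns)) \<longrightarrow>
            (let d = Gcd (set (butlast ns)) in
              poly_related (gen ((\<lambda>x. x div d) ` set (butlast ns) \<union> {last ns})) (gen (set ns))))"
proof -
  have cop: "coprime p q" using assms by (rule primes_coprime)
  have "p \<ge> 1" "q \<ge> 1" using assms(1,2) prime_gt_0_nat by (simp_all add: Suc_le_eq)
  show ?thesis
  proof (intro conjI allI impI)
    fix a b m n :: nat
    assume "1 \<le> a \<and> a \<le> m \<and> 1 \<le> b \<and> b \<le> n"
    moreover have "poly_related (gen {p ^ a, q ^ b}) (gen {p ^ a * p ^ (m - a), q ^ b * q ^ (n - b)})"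
      using cop \<open>p \<ge> 1\<close> \<open>q \<ge> 1\<close> by (intro poly_related_gen_pair_mult) simp_all
    ultimately show "poly_related (gen {p ^ a, q ^ b}) (gen {p ^ m, q ^ n})"
      by (simp flip: power_add)
  next
    fix n a b :: nat
    assume "n \<ge> 1 \<and> a \<ge> 1 \<and> b \<ge> 1 \<and> 2 \<le> a + b \<and> a + b \<le> n + 1"
    then show "poly_related (gen {p ^ a, q ^ b}) (B_sg n p q)"
      using poly_related_gen_pair_B_sg[OF cop \<open>p \<ge> 1\<close> \<open>q \<ge> 1\<close>] by blast
  next
    fix ns :: "nat list"
    assume "length ns \<ge> 2 \<and> (\<forall>x\<in>set ns. x \<ge> 1) \<and> numerical_semigroup (gen (set ns))"
    then show "let d = Gcd (set (butlast ns)) in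
        poly_related (gen ((\<lambda>x. x div d) ` set (butlast ns) \<union> {last ns})) (gen (set ns))"
      unfolding Let_def using poly_related_divide_butlast_by_Gcd by blast
  qed
qed

end
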